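(* Let two circles $\Omega$ and $\omega$ meet at a point $X$. Let $A, B, C, D$ be points on $\omega$ with $AB \parallel CD$. Let lines $XA, XB, XC, XD$ meet $\Omega$ again at $E, F, G, H$ respectively. Then $EF \parallel GH$. *)

theory Defs
  imports "HOL-Analysis.Analysis"
begin

text \<open>Line PQ (P \<noteq> Q) is parallel to line RS (R \<noteq> S) iff their direction
  vectors are real multiples of one another (coincident lines count as parallel).\<close>

definition parallel :: "complex \<Rightarrow> complex \<Rightarrow> complex \<Rightarrow> complex \<Rightarrow> bool" where
  "parallel P Q R S \<longleftrightarrow> P \<noteq> Q \<and> R \<noteq> S \<and> (\<exists>c::real. S - R = c *\<^sub>R (Q - P))"

end

theory Submission
  imports Defs
begin

text \<open>In complex coordinates a point z of the circle with centre Z and radius r satisfies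
  cnj (z - Z) = r^2 / (z - Z), so a chord PQ of that circle satisfies
  cnj (Q - P) / (Q - P) = - r^2 / ((P - Z) (Q - Z)). Hence two chords (of possibly different circles)
  are parallel iff the quantities (P - Z) (Q - Z) / r^2 agree. Applied to the secants XA and XE this
  gives E - O1 = \<lambda> (A - O2) with \<lambda> independent of A: the second-intersection map from \<omega> to \<Omega>
  is the restriction of a spiral similarity, and spiral similarities preserve parallelism.\<close>

lemma cnj_chord:
  fixes P Q Z :: complex
  assumes "dist P Z = r" "dist Q Z = r"
  shows "cnj (Q - P) * ((P - Z) * (Q - Z)) = - of_real (r\<^sup>2) * (Q - P)"
proof -
  define a b where "a = P - Z" and "b = Q - Z"
  have "cnj a * a = of_real (r\<^sup>2)" "cnj b * b = of_real (r\<^sup>2)"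
    using assms complex_norm_square[of a] complex_norm_square[of b]
    by (simp_all add: a_def b_def dist_norm mult.commute)
  have "cnj (b - a) * (a * b) = (cnj b * b) * a - (cnj a * a) * b"
    by (simp add: algebra_simps)
  also have "\<dots> = - of_real (r\<^sup>2) * (b - a)"
    using \<open>cnj a * a = _\<close> \<open>cnj b * b = _\<close> by (simp add: algebra_simps)
  finally show ?thesis by (simp add: a_def b_def)
qed

lemma real_multiple_iff_cnj:
  fixes w w' :: complex
  assumes "w \<noteq> 0"
  shows "(\<exists>c::real. w' = c *\<^sub>R w) \<longleftrightarrow> cnj w' * w = cnj w * w'"
proof
  assume "\<exists>c::real. w' = c *\<^sub>R w"
  then show "cnj w' * w = cnj w * w'" by (auto simp: scaleR_conv_of_real)
next
  assume "cnj w' * w = cnj w * w'"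
  then have "cnj (w' / w) = w' / w" using assms by (simp add: field_simps)
  then have "w' / w = of_real (Re (w' / w))" by (metis Reals_cnj_iff Re_complex_of_real Reals_cases)
  then have "w' = Re (w' / w) *\<^sub>R w" using assms by (simp add: scaleR_conv_of_real field_simps)
  then show "\<exists>c::real. w' = c *\<^sub>R w" ..
qed

lemma parallel_chords_iff:
  fixes P Q R S Z Z' :: complex
  assumes "dist P Z = r" "dist Q Z = r" "dist R Z' = r'" "dist S Z' = r'" "P \<noteq> Q" "R \<noteq> S"
  shows "parallel P Q R S \<longleftrightarrow> (P - Z) * (Q - Z) / of_real (r\<^sup>2) = (R - Z') * (S - Z') / of_real (r'\<^sup>2)"
proof -
  define u v a b where "u = Q - P" and "v = S - R"
    and "a = (P - Z) * (Q - Z)" and "b = (R - Z') * (S - Z')"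
  have "r \<noteq> 0" "r' \<noteq> 0" using assms by auto
  then have "a \<noteq> 0" "b \<noteq> 0" using assms by (auto simp: a_def b_def)
  have "u \<noteq> 0" "v \<noteq> 0" using assms by (simp_all add: u_def v_def)
  have cnj_u: "cnj u * a = - of_real (r\<^sup>2) * u" and cnj_v: "cnj v * b = - of_real (r'\<^sup>2) * v"
    using cnj_chord[OF assms(1,2)] cnj_chord[OF assms(3,4)] by (simp_all add: u_def v_def a_def b_def)
  have "parallel P Q R S \<longleftrightarrow> cnj v * u = cnj u * v"
    unfolding parallel_def u_def v_def using real_multiple_iff_cnj assms(5,6) by simp
  also have "\<dots> \<longleftrightarrow> (cnj v * b) * u * a = (cnj u * a) * v * b"
    using \<open>a \<noteq> 0\<close> \<open>b \<noteq> 0\<close> by (auto simp: algebra_simps)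
  also have "\<dots> \<longleftrightarrow> of_real (r'\<^sup>2) * a = of_real (r\<^sup>2) * b"
    unfolding cnj_u cnj_v using \<open>u \<noteq> 0\<close> \<open>v \<noteq> 0\<close> by (auto simp: algebra_simps)
  also have "\<dots> \<longleftrightarrow> a / of_real (r\<^sup>2) = b / of_real (r'\<^sup>2)"
    using \<open>r \<noteq> 0\<close> \<open>r' \<noteq> 0\<close> by (simp add: field_simps)
  finally show ?thesis by (simp add: a_def b_def)
qed

lemma collinear_imp_parallel:
  fixes X P P' :: complex
  assumes "collinear {X, P, P'}" "P \<noteq> X" "P' \<noteq> X"
  shows "parallel X P X P'"
proof -
  have "collinear {0, P - X, P' - X}"
    using assms(1) collinear_3[of P X P'] by (simp add: insert_commute)
  then show ?thesis
    unfolding parallel_def using assms(2,3) by (simp add: collinear_lemma)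
qed

lemma secant_second_point:
  fixes X P P' Z Z' :: complex
  assumes "dist X Z = r" "dist P Z = r" "dist X Z' = r'" "dist P' Z' = r'"
    and "P \<noteq> X" "P' \<noteq> X" "collinear {X, P, P'}"
  shows "P' - Z' = of_real (r'\<^sup>2) * (X - Z) / (of_real (r\<^sup>2) * (X - Z')) * (P - Z)"
proof -
  define x p x' p' where "x = X - Z" and "p = P - Z" and "x' = X - Z'" and "p' = P' - Z'"
  have "r \<noteq> 0" "r' \<noteq> 0" "x' \<noteq> 0" using assms by (auto simp: x'_def)
  have "x * p / of_real (r\<^sup>2) = x' * p' / of_real (r'\<^sup>2)"
    using parallel_chords_iff[OF assms(1-4)] collinear_imp_parallel[OF assms(7,5,6)] assms(5,6)
    by (simp add: x_def p_def x'_def p'_def)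
  with \<open>r \<noteq> 0\<close> \<open>r' \<noteq> 0\<close> \<open>x' \<noteq> 0\<close> have "p' = of_real (r'\<^sup>2) * x / (of_real (r\<^sup>2) * x') * p"
    by (simp add: field_simps)
  then show ?thesis by (simp add: x_def p_def x'_def p'_def)
qed

lemma parallel_similarity_image:
  fixes A B C D c k :: complex
  assumes "parallel A B C D" "k \<noteq> 0"
  shows "parallel (c + k * A) (c + k * B) (c + k * C) (c + k * D)"
proof -
  obtain t :: real where t: "D - C = t *\<^sub>R (B - A)" using assms(1) unfolding parallel_def by blast
  have "(c + k * D) - (c + k * C) = k * (D - C)" by (simp add: algebra_simps)
  also have "\<dots> = k * (t *\<^sub>R (B - A))" by (simp only: t)
  also have "\<dots> = t *\<^sub>R ((c + k * B) - (c + k * A))"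
    by (simp add: scaleR_conv_of_real algebra_simps)
  finally have "(c + k * D) - (c + k * C) = t *\<^sub>R ((c + k * B) - (c + k * A))" .
  with assms show ?thesis unfolding parallel_def by auto
qed

theorem lemma4p2:
  fixes O1 O2 X A B C D E F G H :: complex and r1 r2 :: real
  assumes "r1 > 0" and "r2 > 0"
    and "dist X O1 = r1" and "dist X O2 = r2"
    and "dist A O2 = r2" and "dist B O2 = r2" and "dist C O2 = r2" and "dist D O2 = r2"
    and "A \<noteq> X" and "B \<noteq> X" and "C \<noteq> X" and "D \<noteq> X"
    and "parallel A B C D"
    and "dist E O1 = r1" and "E \<noteq> X" and "collinear {X, A, E}"
    and "dist F O1 = r1" and "F \<noteq> X" and "collinear {X, B, F}"
    and "dist G O1 = r1" and "G \<noteq> X" and "collinear {X, C, G}"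
    and "dist H O1 = r1" and "H \<noteq> X" and "collinear {X, D, H}"
  shows "parallel E F G H"
proof -
  define k where "k = of_real (r1\<^sup>2) * (X - O2) / (of_real (r2\<^sup>2) * (X - O1))"
  define c where "c = O1 - k * O2"
  have "k \<noteq> 0" using assms(1-4) by (auto simp: k_def)
  have image: "P' = c + k * P"
    if "dist P O2 = r2" "dist P' O1 = r1" "P \<noteq> X" "P' \<noteq> X" "collinear {X, P, P'}" for P P'
  proof -
    have "P' - O1 = k * (P - O2)"
      unfolding k_def using secant_second_point[of X O2 r2 P O1 r1 P'] assms(3,4) that by blast
    then show ?thesis by (simp add: c_def algebra_simps)
  qed
  have "parallel (c + k * A) (c + k * B) (c + k * C) (c + k * D)"
    using parallel_similarity_image[OF assms(13) \<open>k \<noteq> 0\<close>] .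
  then show ?thesis
    using image[of A E] image[of B F] image[of C G] image[of D H] assms by simp
qed

end
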